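(* Let $n\ge0$, $H\ge0$ and $0\le i\le n$ be integers, and put $R_4(\varepsilon)=\binom{n+i+\varepsilon}{n}\binom{2n-i-\varepsilon}{n}$. Then $\tilde\Phi_n^{-1}d_n^{H}\frac1{H!}\frac{\partial^H}{\partial\varepsilon^H}R_4(\varepsilon)\big|_{\varepsilon=0}$ is an integer, where $\tilde\Phi_n=\prod_{p\text{ prime},\ p<n,\ \{n/p\}\in[2/3,1)}p$.
   Context: For complex $x$ and integer $m\ge0$, $\binom xm=x(x-1)\cdots(x-m+1)/m!$. $d_n=\operatorname{lcm}(1,\dots,n)$, $d_0=1$; $\{x\}$ is the fractional part of $x$; an empty product equals $1$. *)

theory Defs
  imports "HOL-Analysis.Analysis" "HOL-Computational_Algebra.Primes"
begin

definition d_lcm :: "nat \<Rightarrow> nat" where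
  "d_lcm n = Lcm {1..n}"

definition Phi_tilde :: "nat \<Rightarrow> nat" where
  "Phi_tilde n = (\<Prod>p\<in>{p. prime p \<and> p < n \<and> frac (real n / real p) \<ge> 2/3 \<and> frac (real n / real p) < 1}. p)"

definition R4 :: "nat \<Rightarrow> nat \<Rightarrow> complex \<Rightarrow> complex" where
  "R4 n i \<epsilon> = ((of_nat n + of_nat i + \<epsilon>) gchoose n) * ((2 * of_nat n - of_nat i - \<epsilon>) gchoose n)"

end

theory Submission
  imports Defs "HOL-Computational_Algebra.Formal_Power_Series"
begin

(* Substituting eps = D x with D = d_n turns R_4 into a polynomial in x with integer
   coefficients: by Vandermonde, binom(m + c x, n) = sum_j binom(m, n - j) binom(c x, j), and
   binom(c x, j) = (c/j) x * prod_{1 <= l < j} ((c/l) x - 1) has integer coefficients as soon as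
   every l <= j divides c.  The x^H coefficient of this polynomial is d_n^H R_4^(H)(0) / H!.
   If p is a prime counted in Phi_n, then {n/p} >= 2/3 means 3 (n mod p) >= 2p, and since
   (n + i) + (2n - i) = 3n one of the two tops m has m mod p < n mod p.  In the corresponding
   Vandermonde sum every term is divisible by p: p | binom(m, n - j) when p | j, because then
   (n - j) mod p = n mod p, and p | d_n / j otherwise.  So p divides every coefficient, and
   hence so does the squarefree product Phi_n. *)

lemma prime_dvd_choose_if_mod_less:
  fixes p :: nat
  assumes "prime p" and "m mod p < k mod p"
  shows "p dvd m choose k"
  using assms(2)
proof (induction m arbitrary: k)
  case 0
  then show ?case by (cases k) auto
next
  case (Suc m)
  then obtain k' where k: "k = Suc k'" by (cases k) auto
  have "\<not> p dvd k" using Suc.prems by auto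
  have "p dvd Suc m * (m choose k')"
  proof (cases "p dvd Suc m")
    case False
    with Suc.prems \<open>\<not> p dvd k\<close> have "m mod p < k' mod p"
      unfolding k by (metis mod_Suc mod_0_imp_dvd Suc_less_eq)
    then show ?thesis using Suc.IH by simp
  qed (simp only: dvd_mult2)
  moreover have "k * (Suc m choose k) = Suc m * (m choose k')"
    using times_binomial_minus1_eq[of k "Suc m"] k by simp
  ultimately have "p dvd k * (Suc m choose k)"
    by (simp only:)
  with \<open>\<not> p dvd k\<close> show ?case using assms(1) prime_dvd_mult_iff by blast
qed

lemma frac_of_nat_divide: "frac (real m / real p) = real (m mod p) / real p"
proof (cases "p = 0")
  case False
  have "real m = real p * real (m div p) + real (m mod p)"
    by (simp flip: of_nat_mult of_nat_add)
  with False show ?thesis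
    unfolding frac_def floor_divide_of_nat_eq by (simp add: field_simps)
qed simp

lemma mod_less_if_add_eq_three_times:
  fixes a b n p :: nat
  assumes "p > 0" and "a + b = 3 * n" and "2 * p \<le> 3 * (n mod p)"
  shows "a mod p < n mod p \<or> b mod p < n mod p"
proof (rule ccontr)
  assume "\<not> ?thesis"
  then have ge: "n mod p \<le> a mod p" "n mod p \<le> b mod p" by auto
  have lt: "a mod p < p" "b mod p < p" "n mod p < p" using \<open>p > 0\<close> by auto
  have "a = p * (a div p) + a mod p" "b = p * (b div p) + b mod p" "n = p * (n div p) + n mod p"
    by simp_all
  with assms(2) have eq:
      "a mod p + b mod p + p * (a div p + b div p) = 3 * (n mod p) + p * (3 * (n div p))"
    by (metis add.commute distrib_left group_cancel.add2 mult.left_commute)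
  show False
  proof (cases "a div p + b div p \<le> 3 * (n div p)")
    case True
    then have "p * (a div p + b div p) \<le> p * (3 * (n div p))" by simp
    with eq show False using lt assms(3) by linarith
  next
    case False
    then have "p * (3 * (n div p)) + p \<le> p * (a div p + b div p)"
      by (metis Suc_le_eq mult_Suc_right mult_le_mono2 not_le add.commute)
    then show False using eq ge lt by linarith
  qed
qed

lemma prod_primes_dvd:
  fixes A :: "'a :: factorial_semiring_gcd set"
  assumes "finite A" and "\<And>p. p \<in> A \<Longrightarrow> prime p"
    and "\<And>p. p \<in> A \<Longrightarrow> p dvd z"
  shows "\<Prod>A dvd z"
  using assms
proof (induction A rule: finite_induct)
  case (insert p A)
  have "prime p" and "p dvd z" and "\<Prod>A dvd z"
    using insert by simp_all
  have "\<not> p dvd \<Prod>A"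
  proof
    assume "p dvd \<Prod>A"
    with \<open>finite A\<close> \<open>prime p\<close> obtain q where "q \<in> A" and "p dvd q"
      by (auto simp: prime_dvd_prod_iff)
    with \<open>prime p\<close> insert.prems(1) have "p = q"
      by (intro primes_dvd_imp_eq) auto
    with \<open>q \<in> A\<close> \<open>p \<notin> A\<close> show False
      by simp
  qed
  with \<open>prime p\<close> have "coprime p (\<Prod>A)"
    by (rule prime_imp_coprime)
  with \<open>p dvd z\<close> \<open>\<Prod>A dvd z\<close> have "p * \<Prod>A dvd z"
    by (intro divides_mult)
  with insert.hyps show ?case
    by simp
qed simp

lemma map_poly_of_int_add:
  "map_poly of_int (P + Q) = (map_poly of_int P + map_poly of_int Q :: 'a :: ring_1 poly)"
  by (rule poly_eqI) (simp add: coeff_map_poly)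

lemma map_poly_of_int_mult:
  "map_poly of_int (P * Q) = (map_poly of_int P * map_poly of_int Q :: 'a :: comm_ring_1 poly)"
  by (rule poly_eqI) (simp add: coeff_map_poly coeff_mult)

lemma poly_map_poly_of_int_sum:
  "poly (map_poly of_int (\<Sum>j\<in>A. P j)) x =
     (\<Sum>j\<in>A. poly (map_poly of_int (P j)) (x :: 'a :: comm_ring_1))"
  by (induction A rule: infinite_finite_induct) (simp_all add: map_poly_of_int_add)

lemma poly_map_poly_of_int_prod:
  "poly (map_poly of_int (\<Prod>j\<in>A. P j)) x =
     (\<Prod>j\<in>A. poly (map_poly of_int (P j)) (x :: 'a :: comm_ring_1))"
  by (induction A rule: infinite_finite_induct) (simp_all add: map_poly_of_int_mult)

lemma gbinomial_Suc_eq_prod: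
  fixes a :: "'a :: field_char_0"
  shows "a gchoose Suc k = a / of_nat (Suc k) * (\<Prod>l = 1..k. (a - of_nat l) / of_nat l)"
proof -
  have "a gchoose Suc k = (a * (\<Prod>l = 1..k. a - of_nat l)) / (of_nat (Suc k) * fact k)"
    by (simp add: gbinomial_Suc prod.atLeast_Suc_atMost[of 0])
  also have "fact k = (\<Prod>l = 1..k. of_nat l :: 'a)"
    by (simp add: fact_prod)
  finally show ?thesis
    by (simp add: prod_dividef)
qed

definition gbinomial_poly :: "int \<Rightarrow> nat \<Rightarrow> int poly" where
  "gbinomial_poly c j =
     (if j = 0 then 1 else [:0, c div int j:] * (\<Prod>l = 1..<j. [:-1, c div int l:]))"

definition gbinomial_affine_poly :: "int \<Rightarrow> nat \<Rightarrow> nat \<Rightarrow> int poly" where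
  "gbinomial_affine_poly c m n =
     (\<Sum>j = 0..n. smult (int (m choose (n - j))) (gbinomial_poly c j))"

lemma poly_gbinomial_poly:
  fixes x :: "'a :: field_char_0"
  assumes "\<And>l. l \<in> {1..j} \<Longrightarrow> int l dvd c"
  shows "poly (map_poly of_int (gbinomial_poly c j)) x = (of_int c * x) gchoose j"
proof (cases j)
  case (Suc k)
  have factor:
      "poly (map_poly of_int [:-1, c div int l:]) x = (of_int c * x - of_nat l) / of_nat l"
    if "l \<in> {1..k}" for l
    using that assms[of l] Suc by (simp add: map_poly_pCons of_int_div field_simps)
  have head: "poly (map_poly of_int [:0, c div int j:]) x = of_int c * x / of_nat j"
    using assms[of j] Suc by (simp add: map_poly_pCons of_int_div)
  have "poly (map_poly of_int (gbinomial_poly c j)) x =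
      poly (map_poly of_int [:0, c div int j:]) x *
      (\<Prod>l = 1..k. poly (map_poly of_int [:-1, c div int l:]) x)"
    by (simp only: gbinomial_poly_def Suc nat.distinct if_False map_poly_of_int_mult poly_mult
        poly_map_poly_of_int_prod atLeastLessThanSuc_atLeastAtMost)
  also have "\<dots> = of_int c * x / of_nat j * (\<Prod>l = 1..k. (of_int c * x - of_nat l) / of_nat l)"
    by (simp only: head prod.cong[OF refl factor])
  also have "\<dots> = (of_int c * x) gchoose j"
    unfolding Suc by (rule gbinomial_Suc_eq_prod[symmetric])
  finally show ?thesis .
qed (simp add: gbinomial_poly_def)

lemma poly_gbinomial_affine_poly:
  fixes x :: "'a :: field_char_0"
  assumes "\<And>l. l \<in> {1..n} \<Longrightarrow> int l dvd c"
  shows "poly (map_poly of_int (gbinomial_affine_poly c m n)) x =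
    (of_nat m + of_int c * x) gchoose n"
proof -
  have "poly (map_poly of_int (gbinomial_affine_poly c m n)) x =
      (\<Sum>j = 0..n. ((of_int c * x) gchoose j) * (of_nat m gchoose (n - j)))"
    unfolding gbinomial_affine_poly_def poly_map_poly_of_int_sum
  proof (rule sum.cong)
    fix j assume "j \<in> {0..n}"
    with assms have "poly (map_poly of_int (gbinomial_poly c j)) x = (of_int c * x) gchoose j"
      by (intro poly_gbinomial_poly) auto
    then show "poly (map_poly of_int (smult (int (m choose (n - j))) (gbinomial_poly c j))) x =
        ((of_int c * x) gchoose j) * (of_nat m gchoose (n - j))"
      by (simp add: map_poly_smult binomial_gbinomial)
  qed simp
  also have "\<dots> = (of_nat m + of_int c * x) gchoose n"
    by (subst gbinomial_Vandermonde) (simp add: add.commute)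
  finally show ?thesis .
qed

lemma prime_const_dvd_gbinomial_poly:
  assumes "prime p" and "int p dvd c" and "\<not> p dvd j" and "int j dvd c"
  shows "[:int p:] dvd gbinomial_poly c j"
proof -
  have "j \<noteq> 0" using assms(3) by (metis dvd_0_right)
  from assms(4) have "c = int j * (c div int j)" by simp
  with assms(1-3) have "int p dvd c div int j"
    by (metis int_dvd_int_iff prime_dvd_mult_iff prime_nat_int_transfer)
  then have "[:int p:] dvd [:0, c div int j:]"
    by (simp add: const_poly_dvd_iff coeff_pCons split: nat.split)
  with \<open>j \<noteq> 0\<close> show ?thesis
    unfolding gbinomial_poly_def by (simp only: if_False dvd_mult2)
qed

lemma prime_const_dvd_gbinomial_affine_poly:
  assumes "prime p" and "int p dvd c" and "\<And>l. l \<in> {1..n} \<Longrightarrow> int l dvd c"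
    and "m mod p < n mod p"
  shows "[:int p:] dvd gbinomial_affine_poly c m n"
  unfolding gbinomial_affine_poly_def
proof (intro dvd_sum)
  fix j assume j: "j \<in> {0..n}"
  show "[:int p:] dvd smult (int (m choose (n - j))) (gbinomial_poly c j)"
  proof (cases "p dvd j")
    case True
    with j have "(n - j) mod p = n mod p"
      by (metis atLeastAtMost_iff le_add_diff_inverse2 dvd_def mod_mult_self2)
    with assms(1,4) have "p dvd m choose (n - j)"
      by (simp add: prime_dvd_choose_if_mod_less)
    then show ?thesis
      by (simp add: const_poly_dvd_iff)
  next
    case False
    then have "j \<noteq> 0" by (metis dvd_0_right)
    with j assms False have "[:int p:] dvd gbinomial_poly c j"
      by (intro prime_const_dvd_gbinomial_poly) auto
    then show ?thesis
      by (simp add: dvd_smult)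
  qed
qed

lemma higher_deriv_poly:
  fixes P :: "'a :: real_normed_field poly"
  shows "(deriv ^^ k) (poly P) = poly ((pderiv ^^ k) P)"
proof (induction k)
  case (Suc k)
  have "deriv (poly Q) = poly (pderiv Q)" for Q :: "'a poly"
    by (rule ext DERIV_imp_deriv poly_DERIV)+
  with Suc show ?case
    by simp
qed simp

lemma higher_deriv_poly_0:
  fixes P :: "'a :: real_normed_field poly"
  shows "(deriv ^^ k) (poly P) 0 = fact k * coeff P k"
  by (simp add: higher_deriv_poly poly_0_coeff_0 coeff_higher_pderiv pochhammer_fact)

lemma higher_deriv_0_of_rescaled_poly:
  fixes Q :: "'a :: real_normed_field poly"
  assumes "c \<noteq> 0" and "\<And>x. poly Q x = f (c * x)"
  shows "c ^ k * ((deriv ^^ k) f 0 / fact k) = coeff Q k"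
proof -
  have "f = poly (pcompose Q [:0, 1 / c:])"
    using assms by (simp add: fun_eq_iff poly_pcompose)
  then show ?thesis
    using assms(1) by (simp add: higher_deriv_poly_0 coeff_pcompose_linear power_one_over)
qed

definition R4_poly :: "nat \<Rightarrow> nat \<Rightarrow> nat \<Rightarrow> int poly" where
  "R4_poly n i D =
     gbinomial_affine_poly (int D) (n + i) n * gbinomial_affine_poly (- int D) (2 * n - i) n"

lemma poly_R4_poly:
  assumes "i \<le> n" and "\<And>l. l \<in> {1..n} \<Longrightarrow> l dvd D"
  shows "poly (map_poly of_int (R4_poly n i D)) x = R4 n i (of_nat D * x)"
proof -
  have "poly (map_poly of_int (gbinomial_affine_poly (int D) (n + i) n)) x =
      (of_nat (n + i) + of_int (int D) * x) gchoose n"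
    by (rule poly_gbinomial_affine_poly) (simp add: assms(2))
  moreover have "poly (map_poly of_int (gbinomial_affine_poly (- int D) (2 * n - i) n)) x =
      (of_nat (2 * n - i) + of_int (- int D) * x) gchoose n"
    by (rule poly_gbinomial_affine_poly) (simp add: assms(2))
  ultimately show ?thesis
    using assms(1) by (simp add: R4_poly_def R4_def map_poly_of_int_mult of_nat_diff)
qed

lemma prime_const_dvd_R4_poly:
  assumes "prime p" and "p dvd D" and "\<And>l. l \<in> {1..n} \<Longrightarrow> l dvd D"
    and "i \<le> n" and "2 * p \<le> 3 * (n mod p)"
  shows "[:int p:] dvd R4_poly n i D"
proof -
  have "(n + i) + (2 * n - i) = 3 * n"
    using assms(4) by simp
  with assms(1,5) consider "(n + i) mod p < n mod p" | "(2 * n - i) mod p < n mod p"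
    using mod_less_if_add_eq_three_times prime_gt_0_nat by blast
  then show ?thesis
  proof cases
    case 1
    have "[:int p:] dvd gbinomial_affine_poly (int D) (n + i) n"
      by (rule prime_const_dvd_gbinomial_affine_poly) (simp_all add: assms 1)
    then show ?thesis
      unfolding R4_poly_def by (rule dvd_mult2)
  next
    case 2
    have "[:int p:] dvd gbinomial_affine_poly (- int D) (2 * n - i) n"
      by (rule prime_const_dvd_gbinomial_affine_poly) (simp_all add: assms 2)
    then show ?thesis
      unfolding R4_poly_def by (rule dvd_mult)
  qed
qed

lemma dvd_d_lcm: "l \<in> {1..n} \<Longrightarrow> l dvd d_lcm n"
  by (simp add: d_lcm_def)

lemma d_lcm_nonzero: "d_lcm n \<noteq> 0"
  by (simp add: d_lcm_def Lcm_0_iff)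

lemma Phi_tilde_dvd_coeff_R4_poly:
  assumes "i \<le> n"
  shows "int (Phi_tilde n) dvd coeff (R4_poly n i (d_lcm n)) k"
proof -
  define S where
    "S = {p. prime p \<and> p < n \<and> frac (real n / real p) \<ge> 2/3 \<and> frac (real n / real p) < 1}"
  have "p dvd nat \<bar>coeff (R4_poly n i (d_lcm n)) k\<bar>" if "p \<in> S" for p
  proof -
    from that have p: "prime p" "p < n" "2/3 \<le> real (n mod p) / real p"
      by (simp_all add: S_def frac_of_nat_divide)
    then have "2 * p \<le> 3 * (n mod p)"
      using prime_gt_0_nat[OF p(1)] by (simp add: field_simps)
    moreover have "p dvd d_lcm n"
      using p(2) prime_gt_0_nat[OF p(1)] by (intro dvd_d_lcm) simp
    ultimately have "[:int p:] dvd R4_poly n i (d_lcm n)"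
      using p(1) assms dvd_d_lcm by (intro prime_const_dvd_R4_poly)
    then show ?thesis
      by (simp add: const_poly_dvd_iff)
  qed
  moreover have "finite S"
    by (rule finite_subset[of _ "{..<n}"]) (auto simp: S_def)
  ultimately have "\<Prod>S dvd nat \<bar>coeff (R4_poly n i (d_lcm n)) k\<bar>"
    by (intro prod_primes_dvd) (auto simp: S_def)
  then show ?thesis
    by (simp add: Phi_tilde_def S_def)
qed

theorem mainTheorem18:
  fixes n H i :: nat
  assumes "i \<le> n"
  shows "of_nat (d_lcm n) ^ H * ((deriv ^^ H) (R4 n i) 0 / fact H) / of_nat (Phi_tilde n) \<in> \<int>"
proof -
  define z where "z = coeff (R4_poly n i (d_lcm n)) H"
  have "of_nat (d_lcm n) ^ H * ((deriv ^^ H) (R4 n i) 0 / fact H) =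
      coeff (map_poly of_int (R4_poly n i (d_lcm n))) H"
    by (rule higher_deriv_0_of_rescaled_poly)
       (simp add: d_lcm_nonzero, rule poly_R4_poly[OF assms dvd_d_lcm])
  then have "of_nat (d_lcm n) ^ H * ((deriv ^^ H) (R4 n i) 0 / fact H) = (of_int z :: complex)"
    by (simp add: z_def coeff_map_poly)
  moreover obtain w where "z = int (Phi_tilde n) * w"
    using Phi_tilde_dvd_coeff_R4_poly[OF assms] unfolding z_def by blast
  ultimately show ?thesis
    by (cases "Phi_tilde n = 0") simp_all
qed

end
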